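(* Let $(M,\cdot,1)$ be a monoid, $\Sigma$ a finite alphabet, $A=(Q,\Sigma,u,i_u,\delta,w,\rho)$ an $M$-DFA recognizing $\mathcal{A}$, and $(g^\pi_A,f^\pi_A)$ the factorization on $L$ induced by $A$ for a selection function $\pi$. Then the right congruence $\equiv^{(g^\pi_A,f^\pi_A)}_{f^\pi_A(\mathcal{A})}$ on $\Sigma^*$ has finite index.
   Context: $L$ is the set of all functions $\Sigma^*\to M$; $(m\cdot\ell)(\gamma)=m\cdot\ell(\gamma)$; $\varepsilon$ is the empty word. An $M$-DFA is $A=(Q,\Sigma,u,i_u,\delta,w,\rho)$ with $Q$ finite nonempty, initial state $u$, initial value $i_u\in M$, $\delta:Q\times\Sigma\to Q$, $w:Q\times\Sigma\to M$, $\rho:Q\to M$. Write $q\alpha$ for the extended transition, $w^*(q,\varepsilon)=1$, $w^*(q,\alpha\sigma)=w^*(q,\alpha)\cdot w(q\alpha,\sigma)$; $\mathcal{A}(\alpha)=i_u\cdot w^*(u,\alpha)\cdot\rho(u\alpha)$ and $\mathcal{A}_q(\alpha)=w^*(q,\alpha)\cdot\rho(q\alpha)$. $\Delta_\alpha(\ell)(\gamma)=\ell(\alpha\gamma)$. Induced factorization: let $P_A=\{((\sigma,q),\Delta_\sigma(\mathcal{A}_q))\mid\sigma\in\Sigma,q\in Q\}\cup\{((\varepsilon,u),\mathcal{A})\}$, with $\approx_A$ identifying elements with equal language component. A selection function $\pi$ picks a representative per class, always picking $((\varepsilon,u),\mathcal{A})$ for its class. Then $f^\pi_A(\mathcal{A})=\mathcal{A}_u$,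 $g^\pi_A(\mathcal{A})=i_u$; if $\ell\neq\mathcal{A}$ is the language component of a class with representative $((\sigma,q),\Delta_\sigma(\mathcal{A}_q))$, then $f^\pi_A(\ell)=\mathcal{A}_{q\sigma}$, $g^\pi_A(\ell)=w(q,\sigma)$; otherwise $f^\pi_A(\ell)=\ell$, $g^\pi_A(\ell)=1$. (This pair satisfies $g^\pi_A(\ell)\cdot f^\pi_A(\ell)=\ell$.) For a pair $(g,f)$ with $g:L\to M$, $f:L\to L$, define $S^{(g,f)}_\varepsilon=\mathrm{id}_L$ and $S^{(g,f)}_{\alpha\sigma}=f\circ\Delta_\sigma\circ S^{(g,f)}_\alpha$; for $\ell\in L$, $\alpha\equiv^{(g,f)}_\ell\beta\iff S^{(g,f)}_\alpha(\ell)=S^{(g,f)}_\beta(\ell)$. Finite index means finitely many equivalence classes. *)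

theory Defs
  imports Main
begin

text \<open>Words over the alphabet 'a are lists; languages are functions 'a list \<Rightarrow> 'm.
  An M-DFA is given by components (delta, w, rho, u, iu) with state type 's.\<close>

definition dstar :: "('s \<Rightarrow> 'a \<Rightarrow> 's) \<Rightarrow> 's \<Rightarrow> 'a list \<Rightarrow> 's" where
  "dstar delta q alpha = foldl delta q alpha"

text \<open>w*(q,[]) = 1, w*(q, alpha@[sigma]) = w*(q,alpha) * w(q alpha, sigma)\<close>
definition wstar :: "('s \<Rightarrow> 'a \<Rightarrow> 's) \<Rightarrow> ('s \<Rightarrow> 'a \<Rightarrow> 'm::monoid_mult) \<Rightarrow> 's \<Rightarrow> 'a list \<Rightarrow> 'm" where
  "wstar delta w q alpha =
     fst (foldl (\<lambda>(m, p) sigma. (m * w p sigma, delta p sigma)) (1, q) alpha)"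

definition lang_state :: "('s \<Rightarrow> 'a \<Rightarrow> 's) \<Rightarrow> ('s \<Rightarrow> 'a \<Rightarrow> 'm::monoid_mult) \<Rightarrow> ('s \<Rightarrow> 'm)
     \<Rightarrow> 's \<Rightarrow> 'a list \<Rightarrow> 'm" where
  "lang_state delta w rho q alpha = wstar delta w q alpha * rho (dstar delta q alpha)"

definition lang_dfa :: "('s \<Rightarrow> 'a \<Rightarrow> 's) \<Rightarrow> ('s \<Rightarrow> 'a \<Rightarrow> 'm::monoid_mult) \<Rightarrow> ('s \<Rightarrow> 'm)
     \<Rightarrow> 's \<Rightarrow> 'm \<Rightarrow> 'a list \<Rightarrow> 'm" where
  "lang_dfa delta w rho u iu alpha = iu * lang_state delta w rho u alpha"

definition Delta :: "'a list \<Rightarrow> ('a list \<Rightarrow> 'm) \<Rightarrow> ('a list \<Rightarrow> 'm)" where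
  "Delta alpha l = (\<lambda>gamma. l (alpha @ gamma))"

text \<open>P_A: the pair (sigma,q) is encoded as ([sigma], q), and (epsilon,u) as ([], u).\<close>
definition P_A :: "('s \<Rightarrow> 'a \<Rightarrow> 's) \<Rightarrow> ('s \<Rightarrow> 'a \<Rightarrow> 'm::monoid_mult) \<Rightarrow> ('s \<Rightarrow> 'm)
     \<Rightarrow> 's \<Rightarrow> 'm \<Rightarrow> (('a list \<times> 's) \<times> ('a list \<Rightarrow> 'm)) set" where
  "P_A delta w rho u iu =
     {(([sigma], q), Delta [sigma] (lang_state delta w rho q)) | sigma q. True}
     \<union> {(([], u), lang_dfa delta w rho u iu)}"

text \<open>A selection function picks, for each language component of P_A (i.e. for each
  class of the relation identifying elements with equal language component), a
  representative element of P_A in that class; for the class of A it picks ((epsilon,u),A).\<close>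
definition selection :: "('s \<Rightarrow> 'a \<Rightarrow> 's) \<Rightarrow> ('s \<Rightarrow> 'a \<Rightarrow> 'm::monoid_mult) \<Rightarrow> ('s \<Rightarrow> 'm)
     \<Rightarrow> 's \<Rightarrow> 'm \<Rightarrow> (('a list \<Rightarrow> 'm) \<Rightarrow> 'a list \<times> 's) \<Rightarrow> bool" where
  "selection delta w rho u iu pi \<longleftrightarrow>
     (\<forall>l \<in> snd ` P_A delta w rho u iu. (pi l, l) \<in> P_A delta w rho u iu) \<and>
     pi (lang_dfa delta w rho u iu) = ([], u)"

definition f_ind :: "('s \<Rightarrow> 'a \<Rightarrow> 's) \<Rightarrow> ('s \<Rightarrow> 'a \<Rightarrow> 'm::monoid_mult) \<Rightarrow> ('s \<Rightarrow> 'm)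
     \<Rightarrow> 's \<Rightarrow> 'm \<Rightarrow> (('a list \<Rightarrow> 'm) \<Rightarrow> 'a list \<times> 's) \<Rightarrow> ('a list \<Rightarrow> 'm) \<Rightarrow> ('a list \<Rightarrow> 'm)" where
  "f_ind delta w rho u iu pi l =
     (if l = lang_dfa delta w rho u iu then lang_state delta w rho u
      else if l \<in> snd ` P_A delta w rho u iu then
        (let (alpha, q) = pi l in lang_state delta w rho (delta q (hd alpha)))
      else l)"

definition g_ind :: "('s \<Rightarrow> 'a \<Rightarrow> 's) \<Rightarrow> ('s \<Rightarrow> 'a \<Rightarrow> 'm::monoid_mult) \<Rightarrow> ('s \<Rightarrow> 'm)
     \<Rightarrow> 's \<Rightarrow> 'm \<Rightarrow> (('a list \<Rightarrow> 'm) \<Rightarrow> 'a list \<times> 's) \<Rightarrow> ('a list \<Rightarrow> 'm) \<Rightarrow> 'm" where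
  "g_ind delta w rho u iu pi l =
     (if l = lang_dfa delta w rho u iu then iu
      else if l \<in> snd ` P_A delta w rho u iu then
        (let (alpha, q) = pi l in w q (hd alpha))
      else 1)"

text \<open>S_[] = id, S_(alpha@[sigma]) = f o Delta_sigma o S_alpha.  (Does not depend on g.)\<close>
definition S_op :: "(('a list \<Rightarrow> 'm) \<Rightarrow> 'm) \<Rightarrow> (('a list \<Rightarrow> 'm) \<Rightarrow> ('a list \<Rightarrow> 'm))
     \<Rightarrow> 'a list \<Rightarrow> ('a list \<Rightarrow> 'm) \<Rightarrow> ('a list \<Rightarrow> 'm)" where
  "S_op g f alpha = foldl (\<lambda>h sigma. f \<circ> Delta [sigma] \<circ> h) id alpha"

definition right_congr :: "(('a list \<Rightarrow> 'm) \<Rightarrow> 'm) \<Rightarrow> (('a list \<Rightarrow> 'm) \<Rightarrow> ('a list \<Rightarrow> 'm))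
     \<Rightarrow> ('a list \<Rightarrow> 'm) \<Rightarrow> ('a list \<times> 'a list) set" where
  "right_congr g f l = {(alpha, beta). S_op g f alpha l = S_op g f beta l}"

end

theory Submission
  imports Defs
begin

text \<open>The right congruence is the kernel of \<open>\<alpha> \<mapsto> S\<^sub>\<alpha>(f(\<A>))\<close>. Since \<open>f(\<A>) = \<A>\<^sub>u\<close> and
  \<open>f\<close> sends every derivative \<open>\<Delta>\<^sub>\<sigma>(\<A>\<^sub>q)\<close> to some state language \<open>\<A>\<^sub>p\<close>, all values
  \<open>S\<^sub>\<alpha>(\<A>\<^sub>u)\<close> lie among the finitely many state languages, so the kernel has finite index.
  The argument does not depend on which representatives the selection function picks.\<close>

lemma finite_quotient_kernel: "finite (f ` A) \<Longrightarrow> finite (A // kernel f)"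
  by (simp add: quotient_kernel_eq_image)

lemma right_congr_eq_kernel: "right_congr g f l = kernel (\<lambda>alpha. S_op g f alpha l)"
  by (simp add: right_congr_def kernel_def)

lemma S_op_snoc: "S_op g f (alpha @ [sigma]) = f \<circ> Delta [sigma] \<circ> S_op g f alpha"
  by (simp add: S_op_def)

lemma S_op_closed:
  assumes "l \<in> X"
    and closed: "\<And>sigma l. l \<in> X \<Longrightarrow> f (Delta [sigma] l) \<in> X"
  shows "S_op g f alpha l \<in> X"
proof (induction alpha rule: rev_induct)
  case Nil
  show ?case using \<open>l \<in> X\<close> by (simp add: S_op_def)
next
  case (snoc sigma alpha)
  then show ?case by (simp add: S_op_snoc closed)
qed

lemma f_ind_lang_dfa:
  "f_ind delta w rho u iu pi (lang_dfa delta w rho u iu) = lang_state delta w rho u"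
  by (simp add: f_ind_def)

lemma f_ind_Delta_lang_state:
  "f_ind delta w rho u iu pi (Delta [sigma] (lang_state delta w rho q))
     \<in> range (lang_state delta w rho)"
proof -
  have "Delta [sigma] (lang_state delta w rho q) \<in> snd ` P_A delta w rho u iu"
    unfolding P_A_def by (rule image_eqI[of _ snd "(([sigma], q), _)"]) auto
  then show ?thesis
    by (auto simp: f_ind_def split: prod.splits)
qed

theorem lemma5:
  fixes delta :: "'s::finite \<Rightarrow> 'a::finite \<Rightarrow> 's"
    and w :: "'s \<Rightarrow> 'a \<Rightarrow> 'm::monoid_mult"
    and rho :: "'s \<Rightarrow> 'm"
    and u :: 's and iu :: 'm
    and pi :: "('a list \<Rightarrow> 'm) \<Rightarrow> 'a list \<times> 's"
  assumes "selection delta w rho u iu pi"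
  shows "finite (UNIV // right_congr (g_ind delta w rho u iu pi) (f_ind delta w rho u iu pi)
                   (f_ind delta w rho u iu pi (lang_dfa delta w rho u iu)))"
proof -
  let ?g = "g_ind delta w rho u iu pi" and ?f = "f_ind delta w rho u iu pi"
  let ?S = "\<lambda>alpha. S_op ?g ?f alpha (lang_state delta w rho u)"
  have "range ?S \<subseteq> range (lang_state delta w rho)"
    by (auto intro!: S_op_closed f_ind_Delta_lang_state)
  then have "finite (range ?S)"
    by (rule finite_subset) simp
  then show ?thesis
    unfolding f_ind_lang_dfa right_congr_eq_kernel by (rule finite_quotient_kernel)
qed

end
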